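(* In the setting below, suppose $p\geq5$. Then for all distinct $i,j,k\in\mathbb Z/N\mathbb Z$ we have $P^+_{ij}\cap P^+_{jk}\subset P^+_{ik}$.
   Context: Setting: $p,q$ distinct primes, $N=p+q$; $M=(m_{ik})_{i,k\in\mathbb Z/N\mathbb Z}$ has entries in $\mathbb Z/pq\mathbb Z$ and $(e^{2\pi i\,m_{ik}/pq})$ is a complex Hadamard matrix (unimodular entries, orthogonal rows). $L_i(k)=m_{ik}$, $L_{ij}=L_j-L_i$. For $d\mid pq$, $d(\mathbb Z/pq\mathbb Z)$ is the subgroup of multiples of $d$. For distinct $i,j$ there is a partition $\mathbb Z/N\mathbb Z=P_{ij}\sqcup Q_{ij}\sqcup R_{ij}$ and $r\in\mathbb Z/pq\mathbb Z$ with: $\#R_{ij}=2$ and $L_{ij}\equiv r$ on $R_{ij}$; $\#P_{ij}=p-1$ and $L_{ij}(P_{ij})=(r+q(\mathbb Z/pq\mathbb Z))\setminus\{r\}$; $\#Q_{ij}=q-1$ and $L_{ij}(Q_{ij})=(r+p(\mathbb Z/pq\mathbb Z))\setminus\{r\}$. This partition is unique ($R_{ij}$ is the pair of indices where $L_{ij}$ takes its unique repeated value). Put $P^+_{ij}=P_{ij}\cup R_{ij}$, $Q^+_{ij}=Q_{ij}\cup R_{ij}$. *)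

theory Defs
  imports Complex_Main "HOL-Computational_Algebra.Primes"
begin

text \<open>Indices of Z/NZ are represented by {0..<N}; elements of Z/pqZ by their
  canonical representatives in {0..<p*q} (integers taken mod p*q).
  The matrix M is a function nat => nat => int read modulo p*q.\<close>

definition complex_hadamard_mod :: "nat \<Rightarrow> nat \<Rightarrow> (nat \<Rightarrow> nat \<Rightarrow> int) \<Rightarrow> bool" where
  "complex_hadamard_mod N n M \<longleftrightarrow>
     (\<forall>i<N. \<forall>j<N. i \<noteq> j \<longrightarrow>
        (\<Sum>k<N. exp (2 * of_real pi * \<i> * of_int (M i k) / of_nat n)
               * cnj (exp (2 * of_real pi * \<i> * of_int (M j k) / of_nat n))) = 0)"

definition Ldiff :: "nat \<Rightarrow> (nat \<Rightarrow> nat \<Rightarrow> int) \<Rightarrow> nat \<Rightarrow> nat \<Rightarrow> nat \<Rightarrow> int" where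
  "Ldiff n M i j k = (M j k - M i k) mod int n"

text \<open>The coset r + d(Z/pqZ), as a set of representatives in {0..<p*q}.\<close>
definition coset_mod :: "nat \<Rightarrow> nat \<Rightarrow> int \<Rightarrow> int set" where
  "coset_mod n d r = {x. 0 \<le> x \<and> x < int n \<and> x mod int d = r mod int d}"

definition is_PQR_partition ::
  "nat \<Rightarrow> nat \<Rightarrow> (nat \<Rightarrow> nat \<Rightarrow> int) \<Rightarrow> nat \<Rightarrow> nat
     \<Rightarrow> nat set \<Rightarrow> nat set \<Rightarrow> nat set \<Rightarrow> int \<Rightarrow> bool" where
  "is_PQR_partition p q M i j P Q R r \<longleftrightarrow>
     (let N = p + q; n = p * q; L = Ldiff n M i j in
       P \<union> Q \<union> R = {..<N} \<and> P \<inter> Q = {} \<and> P \<inter> R = {} \<and> Q \<inter> R = {} \<and>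
       0 \<le> r \<and> r < int n \<and>
       card R = 2 \<and> (\<forall>k\<in>R. L k = r) \<and>
       card P = p - 1 \<and> L ` P = coset_mod n q r - {r} \<and>
       card Q = q - 1 \<and> L ` Q = coset_mod n p r - {r})"

definition Pplus :: "nat \<Rightarrow> nat \<Rightarrow> (nat \<Rightarrow> nat \<Rightarrow> int) \<Rightarrow> nat \<Rightarrow> nat \<Rightarrow> nat set" where
  "Pplus p q M i j = (THE S. \<exists>P Q R r. is_PQR_partition p q M i j P Q R r \<and> S = P \<union> R)"

end

theory Submission
  imports Defs "HOL-Number_Theory.Cong"
begin

text \<open>
  Write \<open>L\<^sub>i\<^sub>j\<close> for the differences and \<open>r\<^sub>i\<^sub>j\<close> for the repeated value. Modulo \<open>q\<close> we have
  \<open>L\<^sub>i\<^sub>k \<equiv> L\<^sub>i\<^sub>j + L\<^sub>j\<^sub>k\<close>, and \<open>P\<^sup>+\<^sub>i\<^sub>j\<close> is exactly the level set \<open>L\<^sub>i\<^sub>j \<equiv> r\<^sub>i\<^sub>j (mod q)\<close>, of size \<open>p + 1\<close>,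
  while on its complement \<open>Q\<^sub>i\<^sub>j\<close> the offset \<open>(L\<^sub>i\<^sub>j - r\<^sub>i\<^sub>j) mod q\<close> takes every nonzero residue
  exactly once (Chinese remainder theorem).

  If \<open>q\<close> is odd, the offsets of every pair therefore sum to \<open>0\<close> mod \<open>q\<close>; summing
  \<open>L\<^sub>i\<^sub>k \<equiv> L\<^sub>i\<^sub>j + L\<^sub>j\<^sub>k\<close> over all \<open>p + q\<close> indices and using that \<open>p + q\<close> is prime to \<open>q\<close> gives
  \<open>r\<^sub>i\<^sub>k \<equiv> r\<^sub>i\<^sub>j + r\<^sub>j\<^sub>k\<close>, so every common point of the two level sets lies in \<open>P\<^sup>+\<^sub>i\<^sub>k\<close>.
  If \<open>q = 2\<close>, two level sets of size \<open>p + 1\<close> in \<open>p + 2\<close> indices meet in at least two points;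
  \<open>L\<^sub>i\<^sub>k\<close> agrees mod \<open>q\<close> on them, and injectivity of \<open>L\<^sub>i\<^sub>k mod q\<close> on \<open>Q\<^sub>i\<^sub>k\<close> excludes both lying there.
\<close>

lemma card_coset_mod:
  assumes "d > 0"
  shows "card (coset_mod (d * e) d r) = e"
proof -
  have "coset_mod (d * e) d r = (\<lambda>t. r mod int d + int d * int t) ` {..<e}"
  proof (intro equalityI subsetI)
    fix x assume "x \<in> coset_mod (d * e) d r"
    then have x: "0 \<le> x" "x < int d * int e" "x mod int d = r mod int d"
      by (auto simp: coset_mod_def)
    have "0 \<le> x div int d" using x assms by (simp add: pos_imp_zdiv_nonneg_iff)
    moreover have "int d * (x div int d) < int d * int e"
      using x assms minus_mod_eq_mult_div[of x "int d"] pos_mod_sign[of "int d" x] by linarith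
    then have "x div int d < int e" using assms by (simp add: mult_less_cancel_left_pos)
    moreover have "x = r mod int d + int d * (x div int d)"
      using x(3) by (metis mod_mult_div_eq)
    ultimately show "x \<in> (\<lambda>t. r mod int d + int d * int t) ` {..<e}"
      by (intro image_eqI[where x = "nat (x div int d)"]) auto
  next
    fix x assume "x \<in> (\<lambda>t. r mod int d + int d * int t) ` {..<e}"
    then obtain t where t: "t < e" "x = r mod int d + int d * int t" by auto
    have "int d * (int t + 1) \<le> int d * int e"
      using t(1) by (intro mult_left_mono) auto
    moreover have "r mod int d < int d" "0 \<le> r mod int d" using assms by auto
    ultimately show "x \<in> coset_mod (d * e) d r"
      using t by (simp add: coset_mod_def algebra_simps)
  qed
  moreover have "inj_on (\<lambda>t. r mod int d + int d * int t) {..<e}"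
    using assms by (auto simp: inj_on_def)
  ultimately show ?thesis by (simp add: card_image)
qed

lemma obtain_other_elem:
  assumes "2 \<le> card A" "x \<in> A"
  obtains y where "y \<in> A" "y \<noteq> x"
proof -
  have "\<not> A \<subseteq> {x}" using assms(1) card_mono[of "{x}" A] by auto
  then show ?thesis using that by blast
qed

lemma cong_both_factors_imp_eq:
  fixes a b :: int
  assumes "coprime m n" "0 \<le> a" "a < m * n" "0 \<le> b" "b < m * n"
    and "[a = b] (mod m)" "[a = b] (mod n)"
  shows "a = b"
  using assms coprime_cong_mult cong_less_imp_eq_int by blast

lemma dvd_sum_nonzero_residues:
  fixes q :: int
  assumes "odd q" "q > 0"
  shows "q dvd (\<Sum>v\<in>{1..<q}. v)"
proof -
  have "(\<Sum>v\<in>{1..<q}. v) = (\<Sum>v\<in>{1..<q}. q - v)"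
    by (rule sum.reindex_bij_witness[where i="\<lambda>v. q - v" and j="\<lambda>v. q - v"]) auto
  then have "2 * (\<Sum>v\<in>{1..<q}. v) = q * (q - 1)"
    using assms(2) by (simp add: sum_subtractf)
  then have "q dvd 2 * (\<Sum>v\<in>{1..<q}. v)" by simp
  moreover have "coprime q 2" using assms by simp
  ultimately show ?thesis using coprime_dvd_mult_right_iff by blast
qed

lemma cong_Ldiff_Ldiff:
  assumes "d dvd n"
  shows "[Ldiff n M i k x = Ldiff n M i j x + Ldiff n M j k x] (mod int d)"
proof -
  have L: "[Ldiff n M a b x = M b x - M a x] (mod int d)" for a b
    unfolding Ldiff_def cong_def using assms by (simp add: mod_mod_cancel)
  have "[Ldiff n M i j x + Ldiff n M j k x = (M j x - M i x) + (M k x - M j x)] (mod int d)"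
    by (intro cong_add L)
  then have "[Ldiff n M i j x + Ldiff n M j k x = M k x - M i x] (mod int d)" by simp
  with L[of i k] show ?thesis by (metis cong_sym cong_trans)
qed

definition Ldiff_level :: "nat \<Rightarrow> nat \<Rightarrow> (nat \<Rightarrow> nat \<Rightarrow> int) \<Rightarrow> nat \<Rightarrow> nat \<Rightarrow> int \<Rightarrow> nat set" where
  "Ldiff_level p q M i j r = {x. x < p + q \<and> [Ldiff (p * q) M i j x = r] (mod int q)}"

lemma Ldiff_level_subset: "Ldiff_level p q M i j r \<subseteq> {..<p + q}"
  by (auto simp: Ldiff_level_def)

context
  fixes p q :: nat and M :: "nat \<Rightarrow> nat \<Rightarrow> int" and i j :: nat
    and P Q R :: "nat set" and r :: int
  assumes partition: "is_PQR_partition p q M i j P Q R r"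
    and primes: "prime p" "prime q" "p \<noteq> q"
begin

private lemma partition_unfolded:
  "P \<union> Q \<union> R = {..<p + q}" "P \<inter> Q = {}" "P \<inter> R = {}" "Q \<inter> R = {}"
  "0 \<le> r" "r < int (p * q)"
  "card R = 2" "\<forall>x\<in>R. Ldiff (p * q) M i j x = r"
  "card P = p - 1" "Ldiff (p * q) M i j ` P = coset_mod (p * q) q r - {r}"
  "card Q = q - 1" "Ldiff (p * q) M i j ` Q = coset_mod (p * q) p r - {r}"
  using partition unfolding is_PQR_partition_def Let_def by auto

private lemma Q_values:
  assumes "x \<in> Q"
  shows "0 \<le> Ldiff (p * q) M i j x" "Ldiff (p * q) M i j x < int (p * q)"
    "[Ldiff (p * q) M i j x = r] (mod int p)" "Ldiff (p * q) M i j x \<noteq> r"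
  using assms partition_unfolded(12) by (auto simp: coset_mod_def cong_def)

private lemma Q_not_cong:
  assumes "x \<in> Q"
  shows "\<not> [Ldiff (p * q) M i j x = r] (mod int q)"
  using Q_values[OF assms] partition_unfolded(5,6) primes_coprime[OF primes]
    cong_both_factors_imp_eq[of "int p" "int q"] by auto

lemma PQR_partition_Pplus_part: "P \<union> R = Ldiff_level p q M i j r"
proof -
  have "[Ldiff (p * q) M i j x = r] (mod int q)" if "x \<in> P" for x
    using that partition_unfolded(10) by (auto simp: coset_mod_def cong_def)
  moreover have "[Ldiff (p * q) M i j x = r] (mod int q)" if "x \<in> R" for x
    using that partition_unfolded(8) by simp
  ultimately have "P \<union> R \<subseteq> Ldiff_level p q M i j r"
    using partition_unfolded(1) unfolding Ldiff_level_def by blast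
  moreover have "Ldiff_level p q M i j r \<subseteq> P \<union> R"
    using partition_unfolded(1) Q_not_cong unfolding Ldiff_level_def by blast
  ultimately show ?thesis by (rule equalityI)
qed

lemma PQR_partition_Q_eq: "Q = {..<p + q} - Ldiff_level p q M i j r"
  using partition_unfolded(1-4) PQR_partition_Pplus_part by blast

lemma card_Ldiff_level: "card (Ldiff_level p q M i j r) = p + 1"
proof -
  have "finite P" "finite R" using partition_unfolded(1) by (metis finite_Un finite_lessThan)+
  moreover have "p \<ge> 2" using primes(1) prime_ge_2_nat by blast
  ultimately show ?thesis
    using partition_unfolded(3,7,9) PQR_partition_Pplus_part[symmetric] by (simp add: card_Un_disjoint)
qed

lemma bij_betw_Ldiff_offset:
  "bij_betw (\<lambda>x. (Ldiff (p * q) M i j x - r) mod int q)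
     ({..<p + q} - Ldiff_level p q M i j r) {1..<int q}"
proof -
  let ?L = "Ldiff (p * q) M i j" and ?f = "\<lambda>x. (Ldiff (p * q) M i j x - r) mod int q"
  have "finite Q" using partition_unfolded(1) by (metis finite_Un finite_lessThan)
  have "card (coset_mod (p * q) p r - {r}) = q - 1"
    using card_coset_mod[of p q r] partition_unfolded(5,6) prime_gt_0_nat[OF primes(1)]
    by (auto simp: card_Diff_singleton_if coset_mod_def)
  then have "inj_on ?L Q"
    using partition_unfolded(11,12) \<open>finite Q\<close> by (simp add: eq_card_imp_inj_on)
  have "inj_on ?f Q"
  proof (rule inj_onI)
    fix x y assume xy: "x \<in> Q" "y \<in> Q" "?f x = ?f y"
    then have "[?L x - r + r = ?L y - r + r] (mod int q)"
      by (intro cong_add cong_refl) (simp add: cong_def)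
    then have "[?L x = ?L y] (mod int q)" by simp
    moreover have "[?L x = ?L y] (mod int p)"
      using Q_values(3)[OF xy(1)] Q_values(3)[OF xy(2)] by (metis cong_sym cong_trans)
    ultimately have "?L x = ?L y"
      using Q_values(1,2)[OF xy(1)] Q_values(1,2)[OF xy(2)] primes_coprime[OF primes]
        cong_both_factors_imp_eq[of "int p" "int q"] by auto
    with \<open>inj_on ?L Q\<close> xy(1,2) show "x = y" by (auto dest: inj_onD)
  qed
  moreover have "?f ` Q \<subseteq> {1..<int q}"
  proof
    fix v assume "v \<in> ?f ` Q"
    then obtain x where x: "x \<in> Q" "v = ?f x" by blast
    have "v \<noteq> 0" using Q_not_cong[OF x(1)] x(2) by (simp add: cong_iff_dvd_diff mod_eq_0_iff_dvd)
    moreover have "0 \<le> v" "v < int q" using x(2) prime_gt_0_nat[OF primes(2)] by auto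
    ultimately show "v \<in> {1..<int q}" by simp
  qed
  moreover have "card (?f ` Q) = card {1..<int q}"
    using card_image[OF \<open>inj_on ?f Q\<close>] partition_unfolded(11) prime_gt_0_nat[OF primes(2)] by simp
  ultimately show ?thesis
    unfolding bij_betw_def PQR_partition_Q_eq[symmetric] by (simp add: card_subset_eq)
qed

lemma mem_Ldiff_level_if_cong:
  assumes "x < p + q" "y < p + q" "x \<noteq> y"
    and "[Ldiff (p * q) M i j x = Ldiff (p * q) M i j y] (mod int q)"
  shows "x \<in> Ldiff_level p q M i j r"
proof (rule ccontr)
  assume x: "x \<notin> Ldiff_level p q M i j r"
  then have "y \<notin> Ldiff_level p q M i j r"
    using assms(1,4) cong_trans unfolding Ldiff_level_def by blast
  moreover have "[Ldiff (p * q) M i j x - r = Ldiff (p * q) M i j y - r] (mod int q)"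
    using assms(4) by (intro cong_diff cong_refl)
  ultimately show False
    using x assms(1-3) inj_onD[OF bij_betw_imp_inj_on[OF bij_betw_Ldiff_offset], of x y]
    by (simp add: cong_def)
qed

lemma dvd_sum_Ldiff_offset:
  assumes "odd q"
  shows "int q dvd (\<Sum>x<p + q. (Ldiff (p * q) M i j x - r) mod int q)"
proof -
  let ?C = "{..<p + q} - Ldiff_level p q M i j r"
  have "(\<Sum>x<p + q. (Ldiff (p * q) M i j x - r) mod int q)
      = (\<Sum>x\<in>?C. (Ldiff (p * q) M i j x - r) mod int q)"
  proof (rule sum.mono_neutral_right)
    show "\<forall>x\<in>{..<p + q} - ?C. (Ldiff (p * q) M i j x - r) mod int q = 0"
      by (auto simp: Ldiff_level_def cong_iff_dvd_diff)
  qed auto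
  also have "\<dots> = (\<Sum>v\<in>{1..<int q}. v)"
    using sum.reindex_bij_betw[OF bij_betw_Ldiff_offset, of id] by simp
  finally show ?thesis
    using dvd_sum_nonzero_residues[of "int q"] assms prime_gt_0_nat[OF primes(2)] by simp
qed

end

lemma Ldiff_level_unique:
  assumes "is_PQR_partition p q M i j P Q R r" "is_PQR_partition p q M i j P' Q' R' r'"
    and "prime p" "prime q" "p \<noteq> q"
  shows "Ldiff_level p q M i j r' = Ldiff_level p q M i j r"
proof -
  have card: "2 \<le> card (Ldiff_level p q M i j r)"
    using card_Ldiff_level[OF assms(1,3-5)] prime_gt_0_nat[OF assms(3)] by simp
  then obtain x where x: "x \<in> Ldiff_level p q M i j r"
    by (metis card.empty ex_in_conv not_numeral_le_zero)
  with card obtain y where y: "y \<in> Ldiff_level p q M i j r" "x \<noteq> y"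
    by (metis obtain_other_elem)
  with x have "x \<in> Ldiff_level p q M i j r'"
    by (intro mem_Ldiff_level_if_cong[OF assms(2-5)])
      (auto simp: Ldiff_level_def intro: cong_trans cong_sym)
  with x have "[r = r'] (mod int q)"
    unfolding Ldiff_level_def by (auto intro: cong_trans cong_sym)
  then show ?thesis
    unfolding Ldiff_level_def by (auto intro: cong_trans cong_sym)
qed

lemma Pplus_eq_Ldiff_level:
  assumes "is_PQR_partition p q M i j P Q R r" and "prime p" "prime q" "p \<noteq> q"
  shows "Pplus p q M i j = Ldiff_level p q M i j r"
  unfolding Pplus_def
proof (rule the_equality)
  show "\<exists>P Q R r'. is_PQR_partition p q M i j P Q R r' \<and> Ldiff_level p q M i j r = P \<union> R"
    using assms PQR_partition_Pplus_part by metis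
next
  fix S assume "\<exists>P Q R r'. is_PQR_partition p q M i j P Q R r' \<and> S = P \<union> R"
  with assms show "S = Ldiff_level p q M i j r"
    using PQR_partition_Pplus_part Ldiff_level_unique by metis
qed

lemma cong_offsets_add:
  fixes f g h :: "'a \<Rightarrow> int" and m a b c :: int
  assumes "finite A" "coprime m (int (card A))"
    and "\<And>x. x \<in> A \<Longrightarrow> [h x = f x + g x] (mod m)"
    and "m dvd (\<Sum>x\<in>A. (f x - a) mod m)" "m dvd (\<Sum>x\<in>A. (g x - b) mod m)"
    and "m dvd (\<Sum>x\<in>A. (h x - c) mod m)"
  shows "[c = a + b] (mod m)"
proof -
  have "[(\<Sum>x\<in>A. (h x - c) mod m)
      = (\<Sum>x\<in>A. (f x - a) mod m + (g x - b) mod m + (a + b - c))] (mod m)"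
  proof (rule cong_sum)
    fix x assume "x \<in> A"
    have "[(h x - c) mod m = h x - c] (mod m)" by (simp add: cong_def)
    also have "[h x - c = f x + g x - c] (mod m)"
      using assms(3)[OF \<open>x \<in> A\<close>] by (intro cong_diff cong_refl)
    also have "f x + g x - c = (f x - a) + (g x - b) + (a + b - c)" by simp
    also have "[\<dots> = (f x - a) mod m + (g x - b) mod m + (a + b - c)] (mod m)"
      by (intro cong_add cong_refl) (simp_all add: cong_def)
    finally show "[(h x - c) mod m = (f x - a) mod m + (g x - b) mod m + (a + b - c)] (mod m)" .
  qed
  then have "m dvd (\<Sum>x\<in>A. (f x - a) mod m) + (\<Sum>x\<in>A. (g x - b) mod m)
      + int (card A) * (a + b - c)"
    using assms(6) by (simp add: sum.distrib cong_dvd_iff)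
  then have "m dvd int (card A) * (a + b - c)"
    using assms(4,5) by (simp add: dvd_add_right_iff)
  then have "m dvd a + b - c"
    using assms(2) by (simp add: coprime_dvd_mult_right_iff)
  then show ?thesis by (simp add: cong_iff_dvd_diff dvd_diff_commute)
qed

lemma cong_Ldiff_on_Int_Ldiff_level:
  assumes "x \<in> Ldiff_level p q M i j r1 \<inter> Ldiff_level p q M j k r2"
  shows "[Ldiff (p * q) M i k x = r1 + r2] (mod int q)"
proof -
  have "[Ldiff (p * q) M i j x + Ldiff (p * q) M j k x = r1 + r2] (mod int q)"
    using assms unfolding Ldiff_level_def by (auto intro: cong_add)
  with cong_Ldiff_Ldiff[of q "p * q" M i k x j] show ?thesis
    by (auto intro: cong_trans)
qed

lemma card_Int_Ldiff_level_ge: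
  assumes "is_PQR_partition p q M i j P1 Q1 R1 r1" "is_PQR_partition p q M j k P2 Q2 R2 r2"
    and "prime p" "prime q" "p \<noteq> q"
  shows "p + 2 \<le> card (Ldiff_level p q M i j r1 \<inter> Ldiff_level p q M j k r2) + q"
proof -
  let ?X = "Ldiff_level p q M i j r1" and ?Y = "Ldiff_level p q M j k r2"
  have sub: "?X \<union> ?Y \<subseteq> {..<p + q}" using Ldiff_level_subset by blast
  then have "finite ?X" "finite ?Y" by (auto intro: finite_subset[OF _ finite_lessThan])
  with sub have "card ?X + card ?Y \<le> p + q + card (?X \<inter> ?Y)"
    using card_Un_Int[of ?X ?Y] card_mono[of "{..<p + q}" "?X \<union> ?Y"] by simp
  then show ?thesis
    using card_Ldiff_level[OF assms(1,3-5)] card_Ldiff_level[OF assms(2,3-5)] by simp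
qed

lemma Int_Ldiff_level_subset_if_card:
  assumes "is_PQR_partition p q M i k P Q R r3" and "prime p" "prime q" "p \<noteq> q"
    and "2 \<le> card (Ldiff_level p q M i j r1 \<inter> Ldiff_level p q M j k r2)"
  shows "Ldiff_level p q M i j r1 \<inter> Ldiff_level p q M j k r2 \<subseteq> Ldiff_level p q M i k r3"
proof
  fix x assume x: "x \<in> Ldiff_level p q M i j r1 \<inter> Ldiff_level p q M j k r2"
  with assms(5) obtain y where y: "y \<in> Ldiff_level p q M i j r1 \<inter> Ldiff_level p q M j k r2" "y \<noteq> x"
    by (rule obtain_other_elem)
  have "[Ldiff (p * q) M i k x = Ldiff (p * q) M i k y] (mod int q)"
    using cong_Ldiff_on_Int_Ldiff_level[OF x] cong_Ldiff_on_Int_Ldiff_level[OF y(1)]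
    by (auto intro: cong_trans cong_sym)
  moreover have "x < p + q" "y < p + q"
    using x y(1) Ldiff_level_subset by blast+
  ultimately show "x \<in> Ldiff_level p q M i k r3"
    using y(2) by (intro mem_Ldiff_level_if_cong[OF assms(1-4)]) auto
qed

lemma Int_Ldiff_level_subset_if_odd:
  assumes "is_PQR_partition p q M i j P1 Q1 R1 r1" "is_PQR_partition p q M j k P2 Q2 R2 r2"
    and "is_PQR_partition p q M i k P3 Q3 R3 r3"
    and "prime p" "prime q" "p \<noteq> q" "odd q"
  shows "Ldiff_level p q M i j r1 \<inter> Ldiff_level p q M j k r2 \<subseteq> Ldiff_level p q M i k r3"
proof -
  have "coprime q (p + q)"
    using primes_coprime[OF assms(5,4)] assms(6) by (metis coprime_iff_gcd_eq_1 gcd_add2 add.commute)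
  then have coprime: "coprime (int q) (int (card {..<p + q}))"
    by (simp only: card_lessThan coprime_int_iff)
  have add: "[Ldiff (p * q) M i k x = Ldiff (p * q) M i j x + Ldiff (p * q) M j k x] (mod int q)"
    if "x \<in> {..<p + q}" for x
    by (rule cong_Ldiff_Ldiff) simp
  have r3: "[r3 = r1 + r2] (mod int q)"
    by (rule cong_offsets_add[OF finite_lessThan coprime add dvd_sum_Ldiff_offset[OF assms(1,4-7)]
          dvd_sum_Ldiff_offset[OF assms(2,4-7)] dvd_sum_Ldiff_offset[OF assms(3,4-7)]])
  show ?thesis
  proof
    fix x assume x: "x \<in> Ldiff_level p q M i j r1 \<inter> Ldiff_level p q M j k r2"
    then have "x < p + q" using Ldiff_level_subset by blast
    moreover have "[Ldiff (p * q) M i k x = r3] (mod int q)"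
      using cong_Ldiff_on_Int_Ldiff_level[OF x] r3 by (metis cong_sym cong_trans)
    ultimately show "x \<in> Ldiff_level p q M i k r3" by (simp add: Ldiff_level_def)
  qed
qed

theorem corollary6p5:
  fixes p q :: nat and M :: "nat \<Rightarrow> nat \<Rightarrow> int" and i j k :: nat
  assumes "prime p" and "prime q" and "p \<noteq> q"
    and "complex_hadamard_mod (p + q) (p * q) M"
    and "\<forall>a<p + q. \<forall>b<p + q. a \<noteq> b \<longrightarrow> (\<exists>P Q R r. is_PQR_partition p q M a b P Q R r)"
    and "p \<ge> 5"
    and "i < p + q" and "j < p + q" and "k < p + q"
    and "i \<noteq> j" and "j \<noteq> k" and "i \<noteq> k"
  shows "Pplus p q M i j \<inter> Pplus p q M j k \<subseteq> Pplus p q M i k"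
proof -
  obtain P1 Q1 R1 r1 where ij: "is_PQR_partition p q M i j P1 Q1 R1 r1" using assms by blast
  obtain P2 Q2 R2 r2 where jk: "is_PQR_partition p q M j k P2 Q2 R2 r2" using assms by blast
  obtain P3 Q3 R3 r3 where ik: "is_PQR_partition p q M i k P3 Q3 R3 r3" using assms by blast
  let ?X = "Ldiff_level p q M i j r1" and ?Y = "Ldiff_level p q M j k r2"
  have "Pplus p q M i j \<inter> Pplus p q M j k = ?X \<inter> ?Y" "Pplus p q M i k = Ldiff_level p q M i k r3"
    using Pplus_eq_Ldiff_level[OF _ assms(1-3)] ij jk ik by simp_all
  moreover have "?X \<inter> ?Y \<subseteq> Ldiff_level p q M i k r3"
  proof (cases "q = 2")
    case True
    then have "2 \<le> card (?X \<inter> ?Y)"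
      using card_Int_Ldiff_level_ge[OF ij jk assms(1-3)] prime_ge_2_nat[OF assms(1)] by simp
    then show ?thesis by (rule Int_Ldiff_level_subset_if_card[OF ik assms(1-3)])
  next
    case False
    then have "q > 2" using prime_ge_2_nat[OF assms(2)] by simp
    then have "odd q" by (rule prime_odd_nat[OF assms(2)])
    then show ?thesis by (rule Int_Ldiff_level_subset_if_odd[OF ij jk ik assms(1-3)])
  qed
  ultimately show ?thesis by simp
qed

end
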